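(* Let $P$ be a pmf on a finite set $\mathcal{X}$ with $P(x)>0$ for all $x$, and for $(z,Q)\in\mathcal{G}$ let $$c_P(z,Q)=\sum_{x\in\mathcal{X}}g_{z,Q,P}(x)\log_2\frac{\sum_{x'}g_{z,Q,P}(x')}{g_{z,Q,P}(x)}\quad(0\log(a/0)=0).$$ Then on $\mathcal{G}$, $c_P(z,Q)$ is concave in $Q$ for each fixed $z$ and concave in $z$ for each fixed $Q$.
   Context: $g_{z,Q,P}(x)=\big(1-\frac{z^2}{2}\big)P(x)+z\sqrt{Q(x)P(x)}$. $\mathcal{G}=\{(z,Q): z\ge0,\ Q \text{ a pmf on }\mathcal{X},\ g_{z,Q,P}(x)\ge0\ \forall x\in\mathcal{X}\}$ (for fixed $z$, resp. fixed $Q$, the corresponding section of $\mathcal{G}$ is convex). *)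

theory Defs
  imports "HOL-Analysis.Analysis"
begin

text \<open>The finite alphabet X is a finite type 'n; a (probability mass) function on X is a
  vector in real^'n, the entry at x being its value at x.\<close>

definition is_pmf :: "real^'n::finite \<Rightarrow> bool" where
  "is_pmf Q \<longleftrightarrow> (\<forall>x. Q $ x \<ge> 0) \<and> (\<Sum>x\<in>UNIV. Q $ x) = 1"

definition gfun :: "real \<Rightarrow> real^'n::finite \<Rightarrow> real^'n \<Rightarrow> 'n \<Rightarrow> real" where
  "gfun z Q P x = (1 - z^2 / 2) * P $ x + z * sqrt (Q $ x * P $ x)"

definition Gset :: "real^'n::finite \<Rightarrow> (real \<times> (real^'n)) set" where
  "Gset P = {(z, Q) | z Q. z \<ge> 0 \<and> is_pmf Q \<and> (\<forall>x. gfun z Q P x \<ge> 0)}"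

definition cP :: "real^'n::finite \<Rightarrow> real \<Rightarrow> real^'n \<Rightarrow> real" where
  "cP P z Q = (\<Sum>x\<in>UNIV. (if gfun z Q P x = 0 then 0
      else gfun z Q P x * log 2 ((\<Sum>x'\<in>UNIV. gfun z Q P x') / gfun z Q P x)))"

end

theory Submission
  imports Defs
begin

text \<open>Up to the factor 1 / ln 2, c_P(z, Q) is the entropy H(g) = \<Sum>x. g x * ln (\<Sum>g / g x)
  of the nonnegative vector g = g_{z,Q,P}. By Gibbs' inequality H(a) is the minimum over
  sub-probability vectors r of the cross entropy \<Sum>x. a x * ln (1 / r x), attained at
  r = a / \<Sum>a. As a minimum of functions that are linear and nondecreasing in a, H is concave
  and nondecreasing on nonnegative vectors, so H \<circ> g is concave wherever g is pointwise
  concave: in Q because sqrt is concave, in z because g is a quadratic in z with leading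
  coefficient -P x / 2. The same pointwise concavity makes the sections of G convex.\<close>

text \<open>Terms with a x = 0 vanish, which realises the convention 0 log (a / 0) = 0 of cP.\<close>
definition entropy :: "('n::finite \<Rightarrow> real) \<Rightarrow> real" where
  "entropy a = (\<Sum>x\<in>UNIV. a x * ln ((\<Sum>y\<in>UNIV. a y) / a x))"

definition cross_entropy :: "('n::finite \<Rightarrow> real) \<Rightarrow> ('n \<Rightarrow> real) \<Rightarrow> real" where
  "cross_entropy a r = (\<Sum>x\<in>UNIV. a x * ln (1 / r x))"

lemma entropy_eq_cross_entropy_normalized:
  "entropy a = cross_entropy a (\<lambda>x. a x / (\<Sum>y\<in>UNIV. a y))"
  unfolding entropy_def cross_entropy_def by simp

lemma entropy_term_le_cross_entropy_term:
  fixes a r S :: real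
  assumes "0 \<le> a" "0 \<le> r" "0 < a \<Longrightarrow> 0 < r" "a \<le> S"
  shows "a * ln (S / a) \<le> a * ln (1 / r) + S * r - a"
proof (cases "a = 0")
  case False
  with assms have a: "0 < a" and r: "0 < r" and S: "0 < S" by auto
  have "ln (S / a) = ln (1 / r) + ln (S * r / a)"
    using a r S by (simp add: ln_div ln_mult)
  also have "ln (S * r / a) \<le> S * r / a - 1"
    using a r S by (intro ln_le_minus_one) simp
  finally show ?thesis
    using a by (simp add: field_simps mult_left_mono)
qed (use assms in simp)

lemma entropy_le_cross_entropy:
  fixes a r :: "'n::finite \<Rightarrow> real"
  assumes "\<And>x. 0 \<le> a x" "\<And>x. 0 \<le> r x" "\<And>x. 0 < a x \<Longrightarrow> 0 < r x"
    and "(\<Sum>x\<in>UNIV. r x) \<le> 1"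
  shows "entropy a \<le> cross_entropy a r"
proof -
  let ?S = "\<Sum>y\<in>UNIV. a y"
  have "a x \<le> ?S" for x
    by (rule member_le_sum) (use assms in auto)
  then have "entropy a \<le> (\<Sum>x\<in>UNIV. a x * ln (1 / r x) + ?S * r x - a x)"
    unfolding entropy_def
    by (intro sum_mono entropy_term_le_cross_entropy_term) (use assms in auto)
  also have "\<dots> = cross_entropy a r + ?S * (\<Sum>x\<in>UNIV. r x) - ?S"
    by (simp add: cross_entropy_def sum.distrib sum_subtractf sum_distrib_left)
  also have "\<dots> \<le> cross_entropy a r"
    using assms by (simp add: sum_nonneg mult_left_le)
  finally show ?thesis .
qed

lemma scaled_entropy_le_cross_entropy_normalized:
  fixes c d :: "'n::finite \<Rightarrow> real"
  assumes "0 \<le> t" "\<And>x. 0 \<le> d x" "\<And>x. t * d x \<le> c x" "\<And>x. 0 \<le> c x"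
  shows "t * entropy d \<le> t * cross_entropy d (\<lambda>x. c x / (\<Sum>y\<in>UNIV. c y))"
proof (cases "t = 0")
  case False
  let ?S = "\<Sum>y\<in>UNIV. c y"
  have "0 < c x / ?S" if "0 < d x" for x
  proof -
    have "0 < c x"
      using False assms(1) assms(3)[of x] \<open>0 < d x\<close> by (smt (verit) mult_pos_pos)
    moreover have "c x \<le> ?S"
      by (rule member_le_sum) (use assms(4) in auto)
    ultimately show ?thesis
      by simp
  qed
  then have "entropy d \<le> cross_entropy d (\<lambda>x. c x / ?S)"
    using assms(2,4) by (intro entropy_le_cross_entropy)
      (auto simp: sum_nonneg simp flip: sum_divide_distrib)
  then show ?thesis
    using assms(1) by (rule mult_left_mono)
qed simp

lemma cross_entropy_normalized_mono:
  fixes a c :: "'n::finite \<Rightarrow> real"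
  assumes "\<And>x. 0 \<le> a x" "\<And>x. a x \<le> c x"
  shows "cross_entropy a (\<lambda>x. c x / (\<Sum>y\<in>UNIV. c y)) \<le> entropy c"
  unfolding entropy_eq_cross_entropy_normalized cross_entropy_def
proof (rule sum_mono)
  fix x
  let ?S = "\<Sum>y\<in>UNIV. c y"
  show "a x * ln (1 / (c x / ?S)) \<le> c x * ln (1 / (c x / ?S))"
  proof (cases "c x = 0")
    case False
    have "0 \<le> c y" for y
      using assms[of y] by linarith
    then have "c x \<le> ?S"
      by (intro member_le_sum) auto
    then have "0 \<le> ln (1 / (c x / ?S))"
      using False assms[of x] by simp
    then show ?thesis
      using assms(2)[of x] by (simp add: mult_right_mono)
  qed (use assms[of x] in simp)
qed

lemma cross_entropy_lincomb:
  "cross_entropy (\<lambda>x. u * a x + v * b x) r = u * cross_entropy a r + v * cross_entropy b r"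
  by (simp add: cross_entropy_def sum_distrib_left sum.distrib algebra_simps)

lemma entropy_concave_mono:
  fixes a b c :: "'n::finite \<Rightarrow> real"
  assumes a: "\<And>x. 0 \<le> a x" and b: "\<And>x. 0 \<le> b x"
    and c: "\<And>x. u * a x + v * b x \<le> c x" and u: "0 \<le> u" and v: "0 \<le> v"
  shows "u * entropy a + v * entropy b \<le> entropy c"
proof -
  define r where "r = (\<lambda>x. c x / (\<Sum>y\<in>UNIV. c y))"
  have ua: "0 \<le> u * a x" and vb: "0 \<le> v * b x" for x
    using a b u v by simp_all
  then have "u * a x \<le> c x" "v * b x \<le> c x" "0 \<le> c x" for x
    using c[of x] ua[of x] vb[of x] by linarith+
  then have "u * entropy a + v * entropy b \<le> u * cross_entropy a r + v * cross_entropy b r"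
    unfolding r_def using a b u v
    by (intro add_mono scaled_entropy_le_cross_entropy_normalized) auto
  also have "\<dots> = cross_entropy (\<lambda>x. u * a x + v * b x) r"
    by (rule cross_entropy_lincomb[symmetric])
  also have "\<dots> \<le> entropy c"
    unfolding r_def using ua vb c by (intro cross_entropy_normalized_mono add_nonneg_nonneg)
  finally show ?thesis .
qed

lemma concave_on_entropy_comp:
  fixes f :: "'a::real_vector \<Rightarrow> 'n::finite \<Rightarrow> real"
  assumes "convex S"
    and pointwise_concave: "\<And>x y u v i. x \<in> S \<Longrightarrow> y \<in> S \<Longrightarrow> 0 \<le> u \<Longrightarrow> 0 \<le> v \<Longrightarrow> u + v = 1 \<Longrightarrow>
      u * f x i + v * f y i \<le> f (u *\<^sub>R x + v *\<^sub>R y) i"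
  shows "concave_on {x \<in> S. \<forall>i. 0 \<le> f x i} (\<lambda>x. entropy (f x))"
proof -
  let ?T = "{x \<in> S. \<forall>i. 0 \<le> f x i}"
  have "u *\<^sub>R x + v *\<^sub>R y \<in> ?T \<and>
      u * entropy (f x) + v * entropy (f y) \<le> entropy (f (u *\<^sub>R x + v *\<^sub>R y))"
    if "x \<in> ?T" "y \<in> ?T" "0 \<le> u" "0 \<le> v" "u + v = 1" for x y u v
  proof -
    have x: "x \<in> S" "\<And>i. 0 \<le> f x i" and y: "y \<in> S" "\<And>i. 0 \<le> f y i"
      using that(1,2) by auto
    have comb: "\<And>i. u * f x i + v * f y i \<le> f (u *\<^sub>R x + v *\<^sub>R y) i"
      using pointwise_concave x(1) y(1) that(3-5) by blast
    have "0 \<le> f (u *\<^sub>R x + v *\<^sub>R y) i" for i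
      using comb[of i] x(2)[of i] y(2)[of i] that(3,4)
      by (meson add_nonneg_nonneg mult_nonneg_nonneg order_trans)
    then show ?thesis
      using convexD[OF \<open>convex S\<close> x(1) y(1) that(3-5)]
        entropy_concave_mono[OF x(2) y(2) comb that(3,4)]
      by simp
  qed
  then show ?thesis
    unfolding concave_on_iff convex_def by blast
qed

lemma sqrt_convex_comb_le:
  fixes x y u v :: real
  assumes "0 \<le> x" "0 \<le> y" "0 \<le> u" "0 \<le> v" "u + v = 1"
  shows "u * sqrt x + v * sqrt y \<le> sqrt (u * x + v * y)"
proof -
  have v: "v = 1 - u"
    using \<open>u + v = 1\<close> by simp
  have "(u * sqrt x + v * sqrt y)\<^sup>2
      = u * (sqrt x)\<^sup>2 + v * (sqrt y)\<^sup>2 - u * v * (sqrt x - sqrt y)\<^sup>2"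
    unfolding v by (simp add: power2_eq_square algebra_simps)
  also have "\<dots> \<le> u * x + v * y"
    using assms by simp
  finally show ?thesis
    by (rule real_le_rsqrt)
qed

lemma convex_is_pmf: "convex {Q. is_pmf Q}"
  unfolding convex_def is_pmf_def
  by (simp add: sum.distrib flip: sum_distrib_left)

lemma gfun_concave_in_Q:
  fixes Q1 Q2 P :: "real^'n::finite"
  assumes "0 \<le> z" "0 \<le> Q1 $ x" "0 \<le> Q2 $ x" "0 \<le> P $ x" "0 \<le> u" "0 \<le> v" "u + v = 1"
  shows "u * gfun z Q1 P x + v * gfun z Q2 P x \<le> gfun z (u *\<^sub>R Q1 + v *\<^sub>R Q2) P x"
proof -
  have "u * sqrt (Q1 $ x * P $ x) + v * sqrt (Q2 $ x * P $ x)
      \<le> sqrt (u * (Q1 $ x * P $ x) + v * (Q2 $ x * P $ x))"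
    using assms by (intro sqrt_convex_comb_le) auto
  then have "z * (u * sqrt (Q1 $ x * P $ x) + v * sqrt (Q2 $ x * P $ x))
      \<le> z * sqrt ((u * Q1 $ x + v * Q2 $ x) * P $ x)"
    unfolding distrib_right mult.assoc using \<open>0 \<le> z\<close> by (rule mult_left_mono)
  moreover have "(1 - z\<^sup>2 / 2) * P $ x = u * ((1 - z\<^sup>2 / 2) * P $ x) + v * ((1 - z\<^sup>2 / 2) * P $ x)"
    using \<open>u + v = 1\<close> by (metis distrib_right mult_1)
  ultimately show ?thesis
    unfolding gfun_def by (simp add: algebra_simps)
qed

lemma gfun_concave_in_z:
  fixes Q P :: "real^'n::finite"
  assumes "0 \<le> P $ x" "0 \<le> u" "0 \<le> v" "u + v = 1"
  shows "u * gfun z1 Q P x + v * gfun z2 Q P x \<le> gfun (u * z1 + v * z2) Q P x"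
proof -
  have v: "v = 1 - u"
    using \<open>u + v = 1\<close> by simp
  have "gfun (u * z1 + v * z2) Q P x - (u * gfun z1 Q P x + v * gfun z2 Q P x)
      = P $ x / 2 * (u * v * (z1 - z2)\<^sup>2)"
    unfolding gfun_def v power2_eq_square by (simp add: field_simps)
  also have "\<dots> \<ge> 0"
    using assms by simp
  finally show ?thesis by simp
qed

lemma cP_eq_entropy: "cP P z Q = entropy (gfun z Q P) / ln 2"
  unfolding cP_def entropy_def sum_divide_distrib
  by (rule sum.cong) (auto simp: log_def)

lemma concave_on_cP_in_Q:
  fixes P :: "real^'n::finite"
  assumes "\<And>x. 0 \<le> P $ x"
  shows "concave_on {Q. (z, Q) \<in> Gset P} (\<lambda>Q. cP P z Q)"
proof -
  have "convex {Q. 0 \<le> z \<and> is_pmf Q}"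
    using convex_is_pmf by (cases "0 \<le> z") auto
  then have "concave_on {Q \<in> {Q. 0 \<le> z \<and> is_pmf Q}. \<forall>x. 0 \<le> gfun z Q P x}
      (\<lambda>Q. entropy (gfun z Q P))"
    by (rule concave_on_entropy_comp) (auto simp: is_pmf_def intro: gfun_concave_in_Q assms)
  moreover have "{Q. (z, Q) \<in> Gset P} = {Q \<in> {Q. 0 \<le> z \<and> is_pmf Q}. \<forall>x. 0 \<le> gfun z Q P x}"
    by (auto simp: Gset_def)
  ultimately show ?thesis
    unfolding cP_eq_entropy by (simp add: concave_on_cdiv)
qed

lemma concave_on_cP_in_z:
  fixes P :: "real^'n::finite"
  assumes "\<And>x. 0 \<le> P $ x"
  shows "concave_on {z. (z, Q) \<in> Gset P} (\<lambda>z. cP P z Q)"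
proof -
  have "convex {z :: real. 0 \<le> z \<and> is_pmf Q}"
    by (cases "is_pmf Q") (auto simp: convex_real_interval(1)[unfolded atLeast_def])
  then have "concave_on {z \<in> {z. 0 \<le> z \<and> is_pmf Q}. \<forall>x. 0 \<le> gfun z Q P x}
      (\<lambda>z. entropy (gfun z Q P))"
    by (rule concave_on_entropy_comp) (auto intro: gfun_concave_in_z assms)
  moreover have "{z. (z, Q) \<in> Gset P} = {z \<in> {z. 0 \<le> z \<and> is_pmf Q}. \<forall>x. 0 \<le> gfun z Q P x}"
    by (auto simp: Gset_def)
  ultimately show ?thesis
    unfolding cP_eq_entropy by (simp add: concave_on_cdiv)
qed

theorem mainTheorem11:
  fixes P :: "real^'n::finite"
  assumes "is_pmf P" and "\<forall>x. P $ x > 0"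
  shows "(\<forall>z. concave_on {Q. (z, Q) \<in> Gset P} (\<lambda>Q. cP P z Q))
       \<and> (\<forall>Q. concave_on {z. (z, Q) \<in> Gset P} (\<lambda>z. cP P z Q))"
proof -
  have "0 \<le> P $ x" for x
    using assms(2) by (simp add: less_imp_le)
  then show ?thesis
    using concave_on_cP_in_Q concave_on_cP_in_z by blast
qed

end
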